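(* Let $\Omega\subseteq\mathbb R^N$ be convex and let $K\in L^\infty(\Omega\times B_1)\cap C^1(\Omega\times(B_1\setminus\{0\}))$ satisfy $|D_xK(x,y)|+|D_yK(x,y)|\le\Lambda|y|^{-1}$ for all $(x,y)\in\Omega\times(B_1\setminus\{0\})$. Then $L_K$ is $1$-regular (with a constant depending only on $N$, $\Lambda$ and $\|K\|_{L^\infty}$).
   Context: $\ell(\rho):=|\ln(\min\{\rho,1/10\})|^{-1}$ for $\rho>0$. $L_K$ is $\alpha$-regular with constant $\Lambda_0$ if, with $K$ extended by zero to $\Omega\times(\mathbb R^N\setminus B_1)$, for all $z,w$ with $z\pm\frac w2\in\Omega$: $\int_{\mathbb R^N\setminus B_{2|w|}}\Big|\frac{K(z+\frac w2,\xi+\frac w2)}{|\xi+\frac w2|^N}-\frac{K(z-\frac w2,\xi-\frac w2)}{|\xi-\frac w2|^N}\Big|\ell(|\xi|)\,d\xi\le\Lambda_0\ell^\alpha(|w|)$. Here $B_r$ is the open ball of radius $r$ centered at $0$. *)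

theory Defs
  imports "HOL-Analysis.Analysis"
begin

definition ell :: "real \<Rightarrow> real" where
  "ell \<rho> = inverse \<bar>ln (min \<rho> (1/10))\<bar>"

definition Kext :: "('a::euclidean_space \<Rightarrow> 'a \<Rightarrow> real) \<Rightarrow> 'a \<Rightarrow> 'a \<Rightarrow> real" where
  "Kext K x y = (if norm y < 1 then K x y else 0)"

definition alpha_regular ::
  "'a::euclidean_space set \<Rightarrow> ('a \<Rightarrow> 'a \<Rightarrow> real) \<Rightarrow> real \<Rightarrow> real \<Rightarrow> bool" where
  "alpha_regular \<Omega> K \<alpha> \<Lambda>0 \<longleftrightarrow>
    (\<forall>z w. z + w /\<^sub>R 2 \<in> \<Omega> \<and> z - w /\<^sub>R 2 \<in> \<Omega> \<longrightarrow>
      (\<integral>\<^sup>+ \<xi> \<in> - ball 0 (2 * norm w).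
          ennreal (\<bar>Kext K (z + w /\<^sub>R 2) (\<xi> + w /\<^sub>R 2) / norm (\<xi> + w /\<^sub>R 2) ^ DIM('a)
                  - Kext K (z - w /\<^sub>R 2) (\<xi> - w /\<^sub>R 2) / norm (\<xi> - w /\<^sub>R 2) ^ DIM('a)\<bar>
                  * ell (norm \<xi>)) \<partial>lborel)
      \<le> ennreal (\<Lambda>0 * ell (norm w) powr \<alpha>))"

end

theory Submission
  imports Defs
begin

text \<open>
  Write \<open>x\<^sub>\<pm> = z \<pm> w/2\<close>, \<open>y\<^sub>\<pm> = \<xi> \<pm> w/2\<close> and \<open>s = |w|\<close>, \<open>r = |\<xi>| \<ge> 2s\<close>.
  If both \<open>y\<^sub>\<pm>\<close> lie in the unit ball, the mean value theorem along the segment from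
  \<open>(x\<^sub>-, y\<^sub>-)\<close> to \<open>(x\<^sub>+, y\<^sub>+)\<close>, on which \<open>|y| \<ge> r/2\<close> and hence \<open>|DK| \<le> 2\<Lambda>/r\<close>,
  together with the Lipschitz bound of \<open>|y|\<^sup>-\<^sup>N\<close> on \<open>r/2 \<le> |y| \<le> 2r\<close>, bounds the integrand
  by \<open>C s/r\<^sup>N\<^sup>+\<^sup>1\<close>. If only one of them does, \<open>\<xi>\<close> lies in a shell of width \<open>s\<close> around
  the unit sphere and the integrand is bounded by a constant. The shell has measure
  \<open>O(s) \<le> O(\<ell>(s))\<close>. Since \<open>\<ell>(r) \<le> 2 \<ell>(s) (r/s)\<^sup>1\<^sup>/\<^sup>2\<close>, the annulus
  \<open>4\<^sup>k 2s \<le> r < 4\<^sup>k\<^sup>+\<^sup>1 2s\<close> contributes \<open>O(2\<^sup>-\<^sup>k \<ell>(s))\<close> to the integral of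
  \<open>s \<ell>(r)/r\<^sup>N\<^sup>+\<^sup>1\<close>, and the geometric series sums to \<open>O(\<ell>(s))\<close>.
\<close>

lemma ln_10_gt_2: "2 < ln (10::real)"
proof -
  have "exp (1::real) < 3" using e_less_272 by simp
  then have "exp 1 * exp 1 < (3::real) * 3" by (intro mult_strict_mono) auto
  then have "exp (2::real) < 10" by (simp add: exp_add[symmetric])
  then show ?thesis by (metis exp_gt_zero ln_exp ln_less_cancel_iff zero_less_numeral)
qed

lemma ln_10_le_neg_ln_min:
  fixes x :: real assumes "0 < x" shows "ln 10 \<le> - ln (min x (1/10))"
proof -
  have "ln (min x (1/10)) \<le> ln (1/10)" using assms by simp
  also have "ln (1/10::real) = - ln 10" by (simp add: ln_div)
  finally show ?thesis by simp
qed

lemma ell_eq_pos: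
  assumes "0 < x" shows "ell x = 1 / (- ln (min x (1/10)))"
  using ln_10_le_neg_ln_min[OF assms] ln_10_gt_2
  by (simp add: ell_def inverse_eq_divide)

lemma ell_nonneg: "0 \<le> ell x"
  by (simp add: ell_def)

lemma ell_le_half: "0 \<le> x \<Longrightarrow> ell x \<le> 1/2"
proof (cases "0 < x")
  case True
  have "2 < - ln (min x (1/10))" using ln_10_le_neg_ln_min[OF True] ln_10_gt_2 by linarith
  then have "1 / (- ln (min x (1/10))) \<le> 1/2" by (intro divide_left_mono) auto
  then show ?thesis using ell_eq_pos[OF True] by simp
qed (simp add: ell_def)

lemma ell_eq_ge: "1/10 \<le> x \<Longrightarrow> ell x = 1 / ln 10"
  by (simp add: ell_eq_pos min_absorb2 ln_div)

lemma le_ell: assumes "0 < s" "s \<le> 1/10" shows "s \<le> ell s"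
proof -
  have "- ln s = ln (1/s)" using assms by (simp add: ln_div)
  also have "\<dots> \<le> 1/s - 1" using assms by (intro ln_le_minus_one) auto
  finally have "- ln s \<le> 1 / s" by simp
  moreover have "0 < - ln s"
    using ln_10_le_neg_ln_min[OF \<open>0 < s\<close>] ln_10_gt_2 assms min_absorb1[of s "1/10"] by linarith
  ultimately have "1 / (1 / s) \<le> 1 / (- ln s)" using assms by (intro divide_left_mono mult_pos_pos) auto
  then show ?thesis using assms ell_eq_pos[of s] by (simp add: min_absorb1)
qed

lemma ln_le_2_sqrt: "1 \<le> t \<Longrightarrow> ln t \<le> 2 * sqrt t"
  using ln_le_minus_one[of "sqrt t"] by (simp add: ln_sqrt)

text \<open>\<open>1/\<ell>\<close> is \<open>|ln|\<close>, which grows slower than \<open>t\<^sup>1\<^sup>/\<^sup>2\<close> in the ratio \<open>t = x/s\<close>.\<close>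
lemma ell_le_sqrt_ratio:
  assumes "0 < s" "s \<le> x" shows "ell x \<le> 2 * ell s * sqrt (x / s)"
proof -
  define ms mx where "ms = min s (1/10)" and "mx = min x (1/10)"
  define q where "q = sqrt (x/s)"
  have pos: "0 < ms" "0 < mx" using assms ms_def mx_def by auto
  have x0: "0 < x" using assms by linarith
  have lx: "2 < - ln mx" using ln_10_le_neg_ln_min[OF x0] ln_10_gt_2 unfolding mx_def by linarith
  have ls: "0 < - ln ms" using ln_10_le_neg_ln_min[OF \<open>0 < s\<close>] ln_10_gt_2 unfolding ms_def by linarith
  have q1: "1 \<le> q" using assms q_def by simp
  have "ln (mx/ms) \<le> ln (x/s)"
    using assms pos unfolding ms_def mx_def by (auto simp: min_def divide_simps)
  moreover have "ln (x/s) \<le> 2 * q" unfolding q_def using assms by (intro ln_le_2_sqrt) simp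
  moreover have "- ln mx \<le> - ln mx * q" "2 * q \<le> - ln mx * q"
    using q1 lx mult_right_mono[of 2 "- ln mx" q] mult_left_mono[of 1 q "- ln mx"] by auto
  ultimately have C: "- ln ms \<le> 2 * q * (- ln mx)"
    using pos by (simp add: ln_div algebra_simps)
  have "ell x = 2 * q / (2 * q * (- ln mx))"
    using ell_eq_pos[of x] assms q1 mx_def by simp
  also have "\<dots> \<le> 2 * q / (- ln ms)"
    using C q1 lx ls by (intro divide_left_mono mult_pos_pos) auto
  also have "\<dots> = 2 * ell s * q" using ell_eq_pos[of s] assms ms_def by simp
  finally show ?thesis unfolding q_def .
qed
lemma power_diff_le:
  fixes x y c :: real
  assumes "0 \<le> y" "y \<le> x" "x \<le> c"
  shows "x ^ n - y ^ n \<le> real n * (x - y) * c ^ (n - 1)"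
proof (induction n)
  case 0 then show ?case by simp
next
  case (Suc n)
  have c0: "0 \<le> c" using assms by linarith
  have "x ^ Suc n - y ^ Suc n = x * (x ^ n - y ^ n) + (x - y) * y ^ n" by (simp add: algebra_simps)
  also have "x * (x ^ n - y ^ n) \<le> c * (real n * (x - y) * c ^ (n - 1))"
  proof (rule mult_mono)
    show "x \<le> c" by fact
    show "x ^ n - y ^ n \<le> real n * (x - y) * c ^ (n - 1)" by (rule Suc.IH)
    show "0 \<le> c" by (rule c0)
    show "0 \<le> x ^ n - y ^ n" using assms by (simp add: power_mono)
  qed
  also have "(x - y) * y ^ n \<le> (x - y) * c ^ n"
    using assms by (intro mult_left_mono power_mono) auto
  also have "c * (real n * (x - y) * c ^ (n - 1)) = real n * (x - y) * c ^ n"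
    by (cases n) (simp_all add: algebra_simps)
  finally have "x ^ Suc n - y ^ Suc n \<le> real n * (x - y) * c ^ n + (x - y) * c ^ n"
    by simp
  then show ?case by (simp add: algebra_simps)
qed

lemma abs_power_diff_le:
  fixes a b c :: real
  assumes "0 \<le> a" "0 \<le> b" "a \<le> c" "b \<le> c"
  shows "\<bar>a ^ n - b ^ n\<bar> \<le> real n * \<bar>a - b\<bar> * c ^ (n - 1)"
proof (cases "b \<le> a")
  case True
  then have "a ^ n - b ^ n \<le> real n * (a - b) * c ^ (n - 1)" using assms by (intro power_diff_le) auto
  moreover have "b ^ n \<le> a ^ n" using True assms by (simp add: power_mono)
  ultimately show ?thesis using True by simp
next
  case False
  then have "b ^ n - a ^ n \<le> real n * (b - a) * c ^ (n - 1)" using assms by (intro power_diff_le) auto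
  moreover have "a ^ n \<le> b ^ n" using False assms by (simp add: power_mono)
  ultimately show ?thesis using False by simp
qed

lemma abs_inverse_power_diff_le:
  fixes a b r s :: real
  assumes r: "0 < r" and a: "r/2 \<le> a" "a \<le> 2*r" and b: "r/2 \<le> b" "b \<le> 2*r" and ab: "\<bar>a - b\<bar> \<le> s"
    and n: "1 \<le> n"
  shows "\<bar>1 / a ^ n - 1 / b ^ n\<bar> \<le> real n * 8 ^ n * s / r ^ (n + 1)"
proof -
  have a0: "0 < a" "0 < b" using r a b by auto
  have den: "(r/2) ^ n * (r/2) ^ n \<le> a ^ n * b ^ n"
    using a b r by (intro mult_mono power_mono) auto
  have "\<bar>1 / a ^ n - 1 / b ^ n\<bar> = \<bar>b ^ n - a ^ n\<bar> / (a ^ n * b ^ n)"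
    using a0 by (simp add: field_simps abs_div)
  also have "\<bar>b ^ n - a ^ n\<bar> \<le> real n * \<bar>b - a\<bar> * (2*r) ^ (n - 1)"
    using a0 a b by (intro abs_power_diff_le) auto
  also have "\<dots> \<le> real n * s * (2*r) ^ (n - 1)"
    using ab r by (intro mult_right_mono mult_left_mono) auto
  finally have "\<bar>1 / a ^ n - 1 / b ^ n\<bar> \<le> real n * s * (2*r) ^ (n - 1) / (a ^ n * b ^ n)"
    using a0 by (simp add: divide_right_mono)
  also have "real n * s * (2*r) ^ (n - 1) / (a ^ n * b ^ n) \<le> real n * s * (2*r) ^ (n - 1) / ((r/2) ^ n * (r/2) ^ n)"
    using r ab den a0 by (intro divide_left_mono) (auto intro!: mult_nonneg_nonneg mult_pos_pos)
  also have "real n * s * (2*r) ^ (n - 1) / ((r/2) ^ n * (r/2) ^ n) = real n * s * 2 ^ (n - 1) * 4 ^ n / r ^ (n + 1)"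
  proof -
    obtain m where m: "n = Suc m" using n by (cases n) auto
    have f4: "(4::real)^m = 2^m * 2^m" by (simp add: power_mult_distrib[symmetric])
    show ?thesis using r unfolding m by (simp add: field_simps power_mult_distrib power_divide power_add f4)
  qed
  also have "\<dots> \<le> real n * 8 ^ n * s / r ^ (n + 1)"
  proof -
    have "(2::real) ^ (n - 1) * 4 ^ n \<le> 2 ^ n * 4 ^ n" by (intro mult_right_mono power_increasing) auto
    also have "\<dots> = 8 ^ n" by (simp add: power_mult_distrib[symmetric])
    finally have "(2::real) ^ (n - 1) * 4 ^ n \<le> 8 ^ n" .
    then have "real n * s * (2 ^ (n - 1) * 4 ^ n) \<le> real n * s * 8 ^ n"
      using ab by (intro mult_left_mono) auto
    then show ?thesis using r by (intro divide_right_mono) (auto simp: mult_ac)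
  qed
  finally show ?thesis .
qed

lemma onorm_le_partial_onorms:
  fixes L :: "('a::real_normed_vector \<times> 'b::real_normed_vector) \<Rightarrow>\<^sub>L real"
  shows "onorm L \<le> onorm (\<lambda>h. L (h, 0)) + onorm (\<lambda>k. L (0, k))"
proof -
  have bl1: "bounded_linear (\<lambda>h. L (h, 0))"
    by (intro bounded_linear_compose[OF blinfun.bounded_linear_right] bounded_linear_Pair
        bounded_linear_ident bounded_linear_zero)
  have bl2: "bounded_linear (\<lambda>k. L (0, k))"
    by (intro bounded_linear_compose[OF blinfun.bounded_linear_right] bounded_linear_Pair
        bounded_linear_ident bounded_linear_zero)
  show ?thesis
  proof (rule onorm_bound)
    show "0 \<le> onorm (\<lambda>h. L (h, 0)) + onorm (\<lambda>k. L (0, k))"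
      using onorm_pos_le[OF bl1] onorm_pos_le[OF bl2] by simp
    fix x :: "'a \<times> 'b"
    obtain h k where x: "x = (h, k)" by (cases x)
    have "L (h, k) = L (h, 0) + L (0, k)"
      by (metis add.right_neutral add_0 add_Pair blinfun.add_right)
    then have "norm (L x) \<le> norm (L (h, 0)) + norm (L (0, k))" using x by (simp add: norm_triangle_ineq)
    also have "norm (L (h, 0)) \<le> onorm (\<lambda>h. L (h, 0)) * norm x"
      using onorm[OF bl1, of h] onorm_pos_le[OF bl1] x
      by (meson mult_left_mono norm_fst_le order_trans fst_conv)
    also have "norm (L (0, k)) \<le> onorm (\<lambda>k. L (0, k)) * norm x"
      using onorm[OF bl2, of k] onorm_pos_le[OF bl2] x
      by (meson mult_left_mono norm_snd_le order_trans snd_conv)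
    finally show "norm (L x) \<le> (onorm (\<lambda>h. L (h, 0)) + onorm (\<lambda>k. L (0, k))) * norm x"
      by (simp add: algebra_simps)
  qed
qed

lemma kernel_lipschitz_along_segment:
  fixes \<Omega> :: "'a::euclidean_space set" and K :: "'a \<Rightarrow> 'a \<Rightarrow> real"
    and D :: "'a \<times> 'a \<Rightarrow> ('a \<times> 'a) \<Rightarrow>\<^sub>L real"
  assumes "convex \<Omega>"
    and deriv: "\<forall>p\<in>\<Omega> \<times> (ball 0 1 - {0}).
                  ((\<lambda>q. K (fst q) (snd q)) has_derivative blinfun_apply (D p)) (at p)"
    and deriv_bound: "\<forall>x\<in>\<Omega>. \<forall>y. 0 < norm y \<and> norm y < 1 \<longrightarrow>
             onorm (\<lambda>h. D (x, y) (h, 0)) + onorm (\<lambda>h. D (x, y) (0, h)) \<le> \<Lambda> / norm y"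
    and "x1 \<in> \<Omega>" "x2 \<in> \<Omega>" "closed_segment y1 y2 \<subseteq> ball 0 1"
    and "0 < \<rho>" and away: "\<And>b. b \<in> closed_segment y1 y2 \<Longrightarrow> \<rho> \<le> norm b"
  shows "\<bar>K x1 y1 - K x2 y2\<bar> \<le> \<bar>\<Lambda>\<bar> / \<rho> * norm ((x1, y1) - (x2, y2))"
proof -
  let ?S = "closed_segment (x2, y2) (x1, y1)"
  have "norm ((\<lambda>q. K (fst q) (snd q)) (x1, y1) - (\<lambda>q. K (fst q) (snd q)) (x2, y2))
        \<le> \<bar>\<Lambda>\<bar> / \<rho> * norm ((x1, y1) - (x2, y2))"
  proof (rule differentiable_bound[where f' = "\<lambda>q. blinfun_apply (D q)"])
    fix q assume q: "q \<in> ?S"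
    obtain a b where q_eq: "q = (a, b)" by (cases q)
    have "a \<in> closed_segment x2 x1" "b \<in> closed_segment y1 y2"
      using closed_segment_PairD[of a b x2 y2 x1 y1] q q_eq by (auto simp: closed_segment_commute)
    then have a: "a \<in> \<Omega>" and b: "norm b < 1" "\<rho> \<le> norm b"
      using closed_segment_subset[of x2 \<Omega> x1] assms away by auto
    have "0 < norm b" using b \<open>0 < \<rho>\<close> by linarith
    then have "q \<in> \<Omega> \<times> (ball 0 1 - {0})" using a b q_eq by auto
    then show "((\<lambda>q. K (fst q) (snd q)) has_derivative blinfun_apply (D q)) (at q within ?S)"
      using deriv by (blast intro: has_derivative_at_withinI)
    have "onorm (blinfun_apply (D q)) \<le> onorm (\<lambda>h. D (a, b) (h, 0)) + onorm (\<lambda>k. D (a, b) (0, k))"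
      using onorm_le_partial_onorms[of "D q"] q_eq by simp
    also have "\<dots> \<le> \<Lambda> / norm b"
      using deriv_bound a b(1) \<open>0 < norm b\<close> by blast
    also have "\<dots> \<le> \<bar>\<Lambda>\<bar> / \<rho>"
      using b \<open>0 < \<rho>\<close> by (simp add: frac_le)
    finally show "onorm (blinfun_apply (D q)) \<le> \<bar>\<Lambda>\<bar> / \<rho>" .
  qed auto
  then show ?thesis by simp
qed

lemma kernel_quotient_diff_le:
  fixes \<Omega> :: "'a::euclidean_space set" and K :: "'a \<Rightarrow> 'a \<Rightarrow> real"
    and D :: "'a \<times> 'a \<Rightarrow> ('a \<times> 'a) \<Rightarrow>\<^sub>L real"
  assumes "convex \<Omega>"
    and K_bound: "\<forall>x\<in>\<Omega>. \<forall>y. 0 < norm y \<and> norm y < 1 \<longrightarrow> \<bar>K x y\<bar> \<le> M"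
    and deriv: "\<forall>p\<in>\<Omega> \<times> (ball 0 1 - {0}).
                  ((\<lambda>q. K (fst q) (snd q)) has_derivative blinfun_apply (D p)) (at p)"
    and deriv_bound: "\<forall>x\<in>\<Omega>. \<forall>y. 0 < norm y \<and> norm y < 1 \<longrightarrow>
             onorm (\<lambda>h. D (x, y) (h, 0)) + onorm (\<lambda>h. D (x, y) (0, h)) \<le> \<Lambda> / norm y"
    and x: "x1 \<in> \<Omega>" "x2 \<in> \<Omega>" and y: "norm y1 < 1" "norm y2 < 1"
    and near: "dist \<xi> y1 \<le> norm \<xi> / 2" "dist \<xi> y2 \<le> norm \<xi> / 2" and "\<xi> \<noteq> 0"
    and steps: "norm (x1 - x2) \<le> s" "norm (y1 - y2) \<le> s"
  shows "\<bar>K x1 y1 / norm y1 ^ DIM('a) - K x2 y2 / norm y2 ^ DIM('a)\<bar>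
         \<le> (4 * \<bar>\<Lambda>\<bar> + real DIM('a) * \<bar>M\<bar>) * 8 ^ DIM('a) * s / norm \<xi> ^ (DIM('a) + 1)"
proof -
  define N where "N = DIM('a)"
  define r where "r = norm \<xi>"
  have r0: "0 < r" using \<open>\<xi> \<noteq> 0\<close> r_def by simp
  have s0: "0 \<le> s" using norm_ge_zero[of "x1 - x2"] steps by linarith
  have N1: "1 \<le> N" unfolding N_def using DIM_positive by (simp add: Suc_le_eq)
  have away: "r/2 \<le> norm b" "norm b \<le> 2 * r" if "b \<in> cball \<xi> (r/2)" for b
    using that norm_triangle_ineq2[of \<xi> b] norm_triangle_ineq3[of b \<xi>] r0
    by (auto simp: r_def dist_norm norm_minus_commute)
  have "closed_segment y1 y2 \<subseteq> ball 0 1 \<inter> cball \<xi> (r/2)"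
    using y near r_def by (intro closed_segment_subset convex_Int) auto
  then have "\<bar>K x1 y1 - K x2 y2\<bar> \<le> \<bar>\<Lambda>\<bar> / (r/2) * norm ((x1, y1) - (x2, y2))"
    using away r0 by (intro kernel_lipschitz_along_segment[OF \<open>convex \<Omega>\<close> deriv deriv_bound x]) auto
  also have "\<dots> \<le> \<bar>\<Lambda>\<bar> / (r/2) * (2 * s)"
    using norm_Pair_le[of "x1 - x2" "y1 - y2"] steps r0 by (intro mult_left_mono) auto
  finally have K_diff: "\<bar>K x1 y1 - K x2 y2\<bar> \<le> 4 * \<bar>\<Lambda>\<bar> * s / r" by simp
  have y_range: "r/2 \<le> norm y1" "norm y1 \<le> 2*r" "r/2 \<le> norm y2" "norm y2 \<le> 2*r"
    using away near r_def by (auto simp: dist_commute)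
  then have y_pos: "0 < norm y1" "0 < norm y2" using r0 by linarith+
  have "(r/2) ^ N \<le> norm y1 ^ N" using y_range r0 by (intro power_mono) auto
  then have "\<bar>(K x1 y1 - K x2 y2) / norm y1 ^ N\<bar> \<le> (4 * \<bar>\<Lambda>\<bar> * s / r) / (r/2) ^ N"
    unfolding abs_divide using K_diff r0 s0 by (intro frac_le) auto
  also have "\<dots> = 4 * \<bar>\<Lambda>\<bar> * 2 ^ N * s / r ^ (N + 1)"
    using r0 by (simp add: field_simps power_divide)
  also have "\<dots> \<le> 4 * \<bar>\<Lambda>\<bar> * 8 ^ N * s / r ^ (N + 1)"
    using r0 s0 by (intro divide_right_mono mult_right_mono mult_left_mono power_mono) auto
  finally have first: "\<bar>(K x1 y1 - K x2 y2) / norm y1 ^ N\<bar> \<le> 4 * \<bar>\<Lambda>\<bar> * 8 ^ N * s / r ^ (N + 1)" .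
  have "\<bar>K x2 y2\<bar> \<le> M" using K_bound x y y_pos by blast
  moreover have "\<bar>norm y1 - norm y2\<bar> \<le> s" using norm_triangle_ineq3[of y1 y2] steps by linarith
  ultimately have "\<bar>K x2 y2 * (1 / norm y1 ^ N - 1 / norm y2 ^ N)\<bar> \<le> \<bar>M\<bar> * (real N * 8 ^ N * s / r ^ (N + 1))"
    unfolding abs_mult
    by (intro mult_mono abs_inverse_power_diff_le[OF r0 y_range] N1) auto
  moreover have "K x1 y1 / norm y1 ^ N - K x2 y2 / norm y2 ^ N
      = (K x1 y1 - K x2 y2) / norm y1 ^ N + K x2 y2 * (1 / norm y1 ^ N - 1 / norm y2 ^ N)"
    using y_pos by (simp add: field_simps)
  ultimately have "\<bar>K x1 y1 / norm y1 ^ N - K x2 y2 / norm y2 ^ N\<bar>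
      \<le> 4 * \<bar>\<Lambda>\<bar> * 8 ^ N * s / r ^ (N + 1) + \<bar>M\<bar> * (real N * 8 ^ N * s / r ^ (N + 1))"
    using first abs_triangle_ineq[of "(K x1 y1 - K x2 y2) / norm y1 ^ N"] by linarith
  also have "\<dots> = (4 * \<bar>\<Lambda>\<bar> + real N * \<bar>M\<bar>) * 8 ^ N * s / r ^ (N + 1)"
    by (simp add: algebra_simps add_divide_distrib)
  finally show ?thesis unfolding N_def r_def .
qed

lemma abs_kernel_quotient_le:
  assumes K_bound: "\<forall>x\<in>\<Omega>. \<forall>y. 0 < norm y \<and> norm y < 1 \<longrightarrow> \<bar>K x y\<bar> \<le> M"
    and "x \<in> \<Omega>" "1/4 \<le> norm y" "norm y < 1"
  shows "\<bar>K x y / norm y ^ n\<bar> \<le> \<bar>M\<bar> * 4 ^ n"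
proof -
  have "0 < norm y" using assms by linarith
  then have "\<bar>K x y\<bar> \<le> M" using K_bound assms by blast
  then have "\<bar>K x y\<bar> \<le> \<bar>M\<bar>" by linarith
  moreover have "(1/4) ^ n \<le> norm y ^ n" using assms by (intro power_mono) auto
  ultimately have "\<bar>K x y\<bar> / norm y ^ n \<le> \<bar>M\<bar> / (1/4) ^ n"
    by (intro frac_le) auto
  then show ?thesis by (simp add: abs_divide power_one_over)
qed

text \<open>The cap \<open>4/3\<close> keeps the shell bounded for large \<open>s\<close>: the shell only has to contain
  the points \<open>\<xi>\<close> with \<open>|\<xi>| \<ge> 2s\<close> that are within \<open>s/2\<close> of both the unit ball and its complement.\<close>
definition sphere_shell :: "real \<Rightarrow> 'a::euclidean_space set" where
  "sphere_shell s = ball 0 (min (1 + s/2) (4/3)) - ball 0 (1 - s/2)"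

lemma Kext_quotient_diff_le:
  fixes \<Omega> :: "'a::euclidean_space set" and K :: "'a \<Rightarrow> 'a \<Rightarrow> real"
    and D :: "'a \<times> 'a \<Rightarrow> ('a \<times> 'a) \<Rightarrow>\<^sub>L real"
  assumes "convex \<Omega>"
    and K_bound: "\<forall>x\<in>\<Omega>. \<forall>y. 0 < norm y \<and> norm y < 1 \<longrightarrow> \<bar>K x y\<bar> \<le> M"
    and deriv: "\<forall>p\<in>\<Omega> \<times> (ball 0 1 - {0}).
                  ((\<lambda>q. K (fst q) (snd q)) has_derivative blinfun_apply (D p)) (at p)"
    and deriv_bound: "\<forall>x\<in>\<Omega>. \<forall>y. 0 < norm y \<and> norm y < 1 \<longrightarrow>
             onorm (\<lambda>h. D (x, y) (h, 0)) + onorm (\<lambda>h. D (x, y) (0, h)) \<le> \<Lambda> / norm y"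
    and x: "z + w /\<^sub>R 2 \<in> \<Omega>" "z - w /\<^sub>R 2 \<in> \<Omega>"
    and "w \<noteq> 0" and far: "2 * norm w \<le> norm \<xi>"
  shows "\<bar>Kext K (z + w /\<^sub>R 2) (\<xi> + w /\<^sub>R 2) / norm (\<xi> + w /\<^sub>R 2) ^ DIM('a)
          - Kext K (z - w /\<^sub>R 2) (\<xi> - w /\<^sub>R 2) / norm (\<xi> - w /\<^sub>R 2) ^ DIM('a)\<bar>
      \<le> (4 * \<bar>\<Lambda>\<bar> + real DIM('a) * \<bar>M\<bar>) * 8 ^ DIM('a) * norm w / norm \<xi> ^ (DIM('a) + 1)
         + \<bar>M\<bar> * 4 ^ DIM('a) * indicator (sphere_shell (norm w)) \<xi>"
    (is "\<bar>?Q\<bar> \<le> ?decay + ?jump")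
proof -
  define N where "N = DIM('a)"
  define s r where "s = norm w" and "r = norm \<xi>"
  define x1 x2 y1 y2 where "x1 = z + w /\<^sub>R 2" and "x2 = z - w /\<^sub>R 2"
    and "y1 = \<xi> + w /\<^sub>R 2" and "y2 = \<xi> - w /\<^sub>R 2"
  have s0: "0 < s" using \<open>w \<noteq> 0\<close> s_def by simp
  have sr: "s \<le> r / 2" using far s_def r_def by simp
  have dist_y: "dist \<xi> y1 = s/2" "dist \<xi> y2 = s/2"
    by (simp_all add: y1_def y2_def s_def dist_norm)
  have y_range: "r - s/2 \<le> norm y" "norm y \<le> r + s/2" if "dist \<xi> y = s/2" for y
    using that norm_triangle_ineq2[of \<xi> y] norm_triangle_ineq3[of y \<xi>]
    by (auto simp: r_def dist_norm norm_minus_commute)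
  have diffs: "x1 - x2 = w" "y1 - y2 = w"
    by (simp_all add: x1_def x2_def y1_def y2_def algebra_simps flip: scaleR_add_left)
  have decay_nonneg: "0 \<le> ?decay" and jump_nonneg: "0 \<le> ?jump" by simp_all
  have shell: "\<xi> \<in> sphere_shell s \<and> 1/4 \<le> norm y"
    if "norm y < 1" "dist \<xi> y = s/2" "\<not> norm y' < 1" "dist \<xi> y' = s/2" for y y'
    using y_range[OF that(2)] y_range[OF that(4)] that(1,3) sr s0
    by (auto simp: sphere_shell_def r_def)
  consider "norm y1 < 1" "norm y2 < 1" | "norm y1 < 1" "\<not> norm y2 < 1"
    | "\<not> norm y1 < 1" "norm y2 < 1" | "\<not> norm y1 < 1" "\<not> norm y2 < 1" by blast
  then show ?thesis
  proof cases
    case 1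
    have "x1 \<in> \<Omega>" "x2 \<in> \<Omega>" using x x1_def x2_def by simp_all
    moreover have "dist \<xi> y1 \<le> norm \<xi> / 2" "dist \<xi> y2 \<le> norm \<xi> / 2" "\<xi> \<noteq> 0"
      using dist_y sr s0 r_def by auto
    moreover have "norm (x1 - x2) \<le> s" "norm (y1 - y2) \<le> s" using diffs s_def by simp_all
    ultimately have "\<bar>K x1 y1 / norm y1 ^ N - K x2 y2 / norm y2 ^ N\<bar> \<le> ?decay"
      using kernel_quotient_diff_le[OF \<open>convex \<Omega>\<close> K_bound deriv deriv_bound _ _ 1]
      unfolding N_def s_def r_def by blast
    then have "\<bar>?Q\<bar> \<le> ?decay"
      using 1 by (simp add: Kext_def x1_def x2_def y1_def y2_def N_def)
    then show ?thesis using jump_nonneg by linarith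
  next
    case 2
    have "\<bar>?Q\<bar> = \<bar>K x1 y1 / norm y1 ^ N\<bar>"
      using 2 by (simp add: Kext_def x1_def y1_def y2_def N_def)
    also have "\<dots> \<le> ?jump"
      using abs_kernel_quotient_le[OF K_bound] shell[OF 2(1) dist_y(1) 2(2) dist_y(2)] 2 x
      by (simp add: x1_def N_def s_def)
    finally show ?thesis using decay_nonneg by linarith
  next
    case 3
    have "\<bar>?Q\<bar> = \<bar>K x2 y2 / norm y2 ^ N\<bar>"
      using 3 by (simp add: Kext_def x2_def y1_def y2_def N_def)
    also have "\<dots> \<le> ?jump"
      using abs_kernel_quotient_le[OF K_bound] shell[OF 3(2) dist_y(2) 3(1) dist_y(1)] 3 x
      by (simp add: x2_def N_def s_def)
    finally show ?thesis using decay_nonneg by linarith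
  next
    case 4
    then show ?thesis by (simp add: Kext_def y1_def y2_def)
  qed
qed

lemma emeasure_annulus_le:
  fixes t :: real
  assumes "0 \<le> t" "t \<le> 1"
  shows "emeasure lborel (ball (0::'a::euclidean_space) (1 + t) - ball 0 (1 - t))
     \<le> ennreal (unit_ball_vol (real DIM('a)) * real DIM('a) * 2 * t * 2 ^ (DIM('a) - 1))"
proof -
  define V where "V = unit_ball_vol (real DIM('a))"
  define N where "N = DIM('a)"
  have V0: "0 < V" unfolding V_def by simp
  have "emeasure lborel (ball (0::'a) (1 + t) - ball 0 (1 - t))
      = emeasure lborel (ball (0::'a) (1 + t)) - emeasure lborel (ball (0::'a) (1 - t))"
    using emeasure_lborel_ball_finite[of "0::'a" "1 - t"] assms
    by (intro emeasure_Diff) (auto simp: less_top)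
  also have "\<dots> = ennreal (V * (1 + t) ^ N - V * (1 - t) ^ N)"
    using assms V0 unfolding V_def N_def by (simp add: emeasure_ball ennreal_minus power_mono)
  also have "V * (1 + t) ^ N - V * (1 - t) ^ N \<le> V * (real N * (2 * t) * 2 ^ (N - 1))"
    using power_diff_le[of "1 - t" "1 + t" 2 N] assms V0
    by (simp add: right_diff_distrib[symmetric] mult_left_mono)
  finally show ?thesis unfolding V_def N_def by (simp add: ennreal_leI mult_ac)
qed

lemma emeasure_sphere_shell_le:
  fixes s :: real
  assumes "0 < s"
  shows "emeasure lborel (sphere_shell s :: 'a::euclidean_space set)
     \<le> ennreal (9 * unit_ball_vol (real DIM('a)) * real DIM('a) * 2 ^ DIM('a) * ell s)"
proof -
  define V where "V = unit_ball_vol (real DIM('a))"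
  define N where "N = DIM('a)"
  have V0: "0 < V" unfolding V_def by simp
  have N1: "1 \<le> real N" unfolding N_def using DIM_positive by (simp add: Suc_le_eq)
  show ?thesis
  proof (cases "s \<le> 1/10")
    case True
    have "emeasure lborel (sphere_shell s :: 'a set)
        \<le> emeasure lborel (ball (0::'a) (1 + s/2) - ball 0 (1 - s/2))"
      unfolding sphere_shell_def by (intro emeasure_mono) auto
    also have "\<dots> \<le> ennreal (V * real N * 2 * (s/2) * 2 ^ (N - 1))"
      using emeasure_annulus_le[of "s/2"] True assms unfolding V_def N_def by simp
    also have "\<dots> \<le> ennreal (9 * V * real N * 2 ^ N * ell s)"
    proof (rule ennreal_leI)
      have "s \<le> 9 * ell s" using le_ell[OF assms True] ell_nonneg[of s] by linarith
      moreover have "(2::real) ^ (N - 1) \<le> 2 ^ N" by (intro power_increasing) auto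
      ultimately have "s * 2 ^ (N - 1) \<le> 9 * ell s * 2 ^ N"
        using assms by (intro mult_mono) auto
      then show "V * real N * 2 * (s/2) * 2 ^ (N - 1) \<le> 9 * V * real N * 2 ^ N * ell s"
        using V0 N1 mult_left_mono[of _ _ "V * real N"] by (simp add: mult_ac)
    qed
    finally show ?thesis unfolding V_def N_def .
  next
    case False
    have "emeasure lborel (sphere_shell s :: 'a set) \<le> emeasure lborel (ball (0::'a) (4/3))"
      unfolding sphere_shell_def by (intro emeasure_mono) auto
    also have "\<dots> = ennreal (V * (4/3) ^ N)" unfolding V_def N_def by (simp add: emeasure_ball)
    also have "\<dots> \<le> ennreal (9 * V * real N * 2 ^ N * ell s)"
    proof (rule ennreal_leI)
      have "ln (10::real) \<le> 9" using ln_le_minus_one[of 10] by simp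
      then have "1 \<le> 9 / ln (10::real)" using ln_10_gt_2 by simp
      moreover have "(4/3::real) ^ N \<le> 2 ^ N" by (rule power_mono) auto
      ultimately have "(4/3::real) ^ N * 1 * 1 \<le> 2 ^ N * real N * (9 / ln 10)"
        using N1 by (intro mult_mono) auto
      then show "V * (4/3) ^ N \<le> 9 * V * real N * 2 ^ N * ell s"
        using V0 False mult_left_mono[of _ _ V] by (simp add: ell_eq_ge field_simps)
    qed
    finally show ?thesis unfolding V_def N_def .
  qed
qed

lemma power4_bracket:
  fixes r a :: real
  assumes a0: "0 < a" and ra: "a \<le> r"
  shows "\<exists>k::nat. 4 ^ k * a \<le> r \<and> r < 4 ^ (k + 1) * a"
proof -
  obtain n where n: "r / a < 4 ^ n" using real_arch_pow[of 4 "r / a"] by auto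
  then have h: "r < 4 ^ n * a" using a0 by (simp add: divide_less_eq)
  have "(4::real) ^ n * a \<le> 4 ^ (n + 1) * a" using a0 by simp
  then have ex: "\<exists>k. r < 4 ^ (k + 1) * a" using h by (intro exI[of _ n]) linarith
  define k where "k = (LEAST k. r < 4 ^ (k + 1) * a)"
  have k1: "r < 4 ^ (k + 1) * a" unfolding k_def using LeastI_ex[OF ex] .
  have k2: "4 ^ k * a \<le> r"
  proof (cases k)
    case 0 then show ?thesis using ra by simp
  next
    case (Suc j)
    then have "j < k" by simp
    then have "\<not> r < 4 ^ (j + 1) * a" unfolding k_def by (rule not_less_Least)
    then show ?thesis using Suc by simp
  qed
  show ?thesis using k1 k2 by blast
qed

lemma decay_le_on_annulus:
  fixes s C r :: real and k N :: nat
  assumes s0: "0 < s" and C0: "0 \<le> C" and k1: "4 ^ k * (2 * s) \<le> r" and k2: "r < 4 ^ (k + 1) * (2 * s)"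
  shows "C * s / r ^ (N + 1) * ell r \<le> C * s / (4 ^ k * (2 * s)) ^ (N + 1) * (2 * ell s * 2 ^ (k + 2))"
proof (rule mult_mono)
  have p: "0 < 4 ^ k * (2 * s)" using s0 by simp
  show "C * s / r ^ (N + 1) \<le> C * s / (4 ^ k * (2 * s)) ^ (N + 1)"
  proof -
    have r0: "0 < r" using p k1 by linarith
    show ?thesis using p k1 s0 C0 r0 by (intro divide_left_mono power_mono mult_pos_pos zero_less_power) auto
  qed
  have rs: "s \<le> r" using k1 s0
    by (smt (verit) mult_le_cancel_right1 one_le_power)
  have "ell r \<le> 2 * ell s * sqrt (r / s)" using ell_le_sqrt_ratio[OF s0 rs] .
  also have "sqrt (r / s) \<le> 2 ^ (k + 2)"
  proof -
    have "r / s < 4 ^ (k + 1) * 2" using k2 s0 by (simp add: divide_less_eq mult_ac)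
    also have "(4::real) ^ (k + 1) * 2 \<le> (2 ^ (k + 2)) ^ 2"
    proof -
      have "((2::real) ^ (k + 2)) ^ 2 = 4 ^ (k + 2)" by (simp add: power2_eq_square power_mult_distrib[symmetric])
      moreover have "(4::real) ^ (k + 1) * 2 \<le> 4 ^ (k + 2)" by simp
      ultimately show ?thesis by simp
    qed
    finally have "r / s \<le> (2 ^ (k + 2)) ^ 2" by simp
    then have "sqrt (r / s) \<le> sqrt ((2 ^ (k + 2)) ^ 2)" by (rule real_sqrt_le_mono)
    moreover have "sqrt (((2::real) ^ (k+2))^2) = 2^(k+2)" using real_sqrt_abs[of "(2::real)^(k+2)"] by simp
    ultimately show ?thesis by linarith
  qed
  then have "2 * ell s * sqrt (r / s) \<le> 2 * ell s * 2 ^ (k + 2)"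
    by (rule mult_left_mono) (use ell_nonneg[of s] in simp)
  finally show "ell r \<le> 2 * ell s * 2 ^ (k + 2)" .
  show "0 \<le> C * s / (4 ^ k * (2 * s)) ^ (N + 1)" using C0 s0 by simp
  show "0 \<le> ell r" by (rule ell_nonneg)
qed

lemma annulus_term_eq:
  fixes s C V :: real and k N :: nat
  assumes s0: "0 < s"
  shows "C * s / (4 ^ k * (2 * s)) ^ (N + 1) * (2 * ell s * 2 ^ (k + 2)) * (V * (4 ^ (k + 1) * (2 * s)) ^ N)
       = 4 * 4 ^ N * C * V * ell s * (1/2) ^ k"
proof -
  define X where "X = 4 ^ k * (2 * s)"
  have X0: "0 < X" unfolding X_def using s0 by simp
  have e1: "(4::real) ^ (k + 1) * (2 * s) = 4 * X" unfolding X_def by simp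
  have e2: "(4::real) ^ k = 2 ^ k * 2 ^ k" by (simp add: power_mult_distrib[symmetric])
  have "C * s / X ^ (N + 1) * (2 * ell s * 2 ^ (k + 2)) * (V * (4 * X) ^ N)
      = C * s * (2 * ell s * 2 ^ (k + 2)) * V * 4 ^ N / X"
    using X0 by (simp add: power_mult_distrib field_simps)
  also have "\<dots> = 4 * 4 ^ N * C * V * ell s * (1/2) ^ k"
    unfolding X_def using s0 by (simp add: e2 field_simps power_one_over)
  finally have "C * s / X ^ (N + 1) * (2 * ell s * 2 ^ (k + 2)) * (V * (4 * X) ^ N) = 4 * 4 ^ N * C * V * ell s * (1/2) ^ k" .
  then show ?thesis by (simp only: e1 X_def[symmetric])
qed

lemma decay_nn_integral_le:
  fixes s C :: real
  assumes s0: "0 < s" and C0: "0 \<le> C"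
  shows "(\<integral>\<^sup>+\<xi> \<in> - ball (0::'a::euclidean_space) (2 * s).
            ennreal (C * s / norm \<xi> ^ (DIM('a) + 1) * ell (norm \<xi>)) \<partial>lborel)
     \<le> ennreal (8 * 4 ^ DIM('a) * C * unit_ball_vol (real DIM('a)) * ell s)"
proof -
  define N where "N = DIM('a)"
  define V where "V = unit_ball_vol (real DIM('a))"
  have V0: "0 < V" unfolding V_def by simp
  define S where "S k = ball (0::'a) (4 ^ (k + 1) * (2 * s)) - ball 0 (4 ^ k * (2 * s))" for k :: nat
  define c where "c k = C * s / (4 ^ k * (2 * s)) ^ (N + 1) * (2 * ell s * 2 ^ (k + 2))" for k :: nat
  have c0: "0 \<le> c k" for k unfolding c_def using C0 s0 ell_nonneg[of s] by simp
  have S_sets: "S k \<in> sets lborel" for k unfolding S_def by simp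
  have annuli: "ennreal (C * s / norm \<xi> ^ (N + 1) * ell (norm \<xi>)) * indicator (- ball 0 (2 * s)) \<xi>
        \<le> (\<Sum>k. ennreal (c k) * indicator (S k) \<xi>)" for \<xi>
  proof (cases "\<xi> \<in> ball 0 (2 * s)")
    case False
    then obtain k where k1: "4 ^ k * (2 * s) \<le> norm \<xi>" and k2: "norm \<xi> < 4 ^ (k + 1) * (2 * s)"
      using power4_bracket[of "2 * s" "norm \<xi>"] s0 by auto
    have "ennreal (C * s / norm \<xi> ^ (N + 1) * ell (norm \<xi>)) * indicator (- ball 0 (2 * s)) \<xi>
          \<le> ennreal (c k) * indicator (S k) \<xi>"
      using False decay_le_on_annulus[OF s0 C0 k1 k2] k1 k2 unfolding c_def S_def
      by (simp add: ennreal_leI)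
    also have "\<dots> \<le> (\<Sum>k. ennreal (c k) * indicator (S k) \<xi>)"
      using sum_le_suminf[OF summableI, of "{k}"] by simp
    finally show ?thesis .
  qed simp
  have "(\<integral>\<^sup>+\<xi> \<in> - ball (0::'a) (2 * s). ennreal (C * s / norm \<xi> ^ (N + 1) * ell (norm \<xi>)) \<partial>lborel)
      \<le> (\<integral>\<^sup>+\<xi>. (\<Sum>k. ennreal (c k) * indicator (S k) \<xi>) \<partial>lborel)"
    by (rule nn_integral_mono) (rule annuli)
  also have "\<dots> = (\<Sum>k. ennreal (c k) * emeasure lborel (S k))"
    using S_sets by (simp add: nn_integral_suminf nn_integral_cmult_indicator)
  also have "\<dots> \<le> (\<Sum>k. ennreal (4 * 4 ^ N * C * V * ell s * (1/2) ^ k))"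
  proof (rule suminf_le)
    fix k
    have "emeasure lborel (S k) \<le> emeasure lborel (ball (0::'a) (4 ^ (k + 1) * (2 * s)))"
      unfolding S_def by (intro emeasure_mono) auto
    also have "\<dots> = ennreal (V * (4 ^ (k + 1) * (2 * s)) ^ N)"
      unfolding V_def N_def using s0 by (simp add: emeasure_ball)
    finally have "ennreal (c k) * emeasure lborel (S k)
        \<le> ennreal (c k * (V * (4 ^ (k + 1) * (2 * s)) ^ N))"
      using c0 V0 s0 by (simp add: ennreal_mult mult_left_mono)
    also have "c k * (V * (4 ^ (k + 1) * (2 * s)) ^ N) = 4 * 4 ^ N * C * V * ell s * (1/2) ^ k"
      unfolding c_def using annulus_term_eq[OF s0] by simp
    finally show "ennreal (c k) * emeasure lborel (S k) \<le> ennreal (4 * 4 ^ N * C * V * ell s * (1/2) ^ k)" .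
  qed auto
  also have "\<dots> = ennreal (\<Sum>k. 4 * 4 ^ N * C * V * ell s * (1/2) ^ k)"
    using C0 V0 ell_nonneg[of s]
    by (intro suminf_ennreal2 summable_mult summable_geometric) auto
  also have "(\<Sum>k. 4 * 4 ^ N * C * V * ell s * (1/2::real) ^ k) = 8 * 4 ^ N * C * V * ell s"
    using suminf_mult[OF summable_geometric[of "1/2::real"], of "4 * 4 ^ N * C * V * ell s"]
      suminf_geometric[of "1/2::real"] by simp
  finally show ?thesis unfolding N_def V_def .
qed

lemma borel_measurable_ell [measurable]: "ell \<in> borel_measurable borel"
  unfolding ell_def by measurable

lemma nn_integral_decay_plus_shell_le:
  fixes F :: "'a::euclidean_space \<Rightarrow> real" and s A B :: real
  assumes s0: "0 < s" and A0: "0 \<le> A" and B0: "0 \<le> B"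
    and F_le: "\<And>\<xi>. 2 * s \<le> norm \<xi> \<Longrightarrow>
      F \<xi> \<le> A * s / norm \<xi> ^ (DIM('a) + 1) + B * indicator (sphere_shell s) \<xi>"
  shows "(\<integral>\<^sup>+\<xi> \<in> - ball 0 (2 * s). ennreal (F \<xi> * ell (norm \<xi>)) \<partial>lborel)
     \<le> ennreal ((8 * 4 ^ DIM('a) * A + 9 * B * real DIM('a) * 2 ^ DIM('a))
                 * unit_ball_vol (real DIM('a)) * ell s)"
proof -
  define N where "N = DIM('a)"
  define V where "V = unit_ball_vol (real DIM('a))"
  define decay where "decay \<xi> = ennreal (A * s / norm \<xi> ^ (N + 1) * ell (norm \<xi>))
                                 * indicator (- ball 0 (2 * s)) \<xi>" for \<xi> :: 'a
  have shell_sets: "sphere_shell s \<in> sets (lborel :: 'a measure)"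
    unfolding sphere_shell_def by simp
  have decay_measurable: "decay \<in> borel_measurable lborel"
    unfolding decay_def by measurable
  have "ennreal (F \<xi> * ell (norm \<xi>)) * indicator (- ball 0 (2 * s)) \<xi>
        \<le> decay \<xi> + ennreal B * indicator (sphere_shell s) \<xi>" for \<xi>
  proof (cases "\<xi> \<in> ball 0 (2 * s)")
    case False
    let ?a = "A * s / norm \<xi> ^ (N + 1)" and ?b = "B * indicator (sphere_shell s) \<xi> :: real"
    have ell: "0 \<le> ell (norm \<xi>)" "ell (norm \<xi>) \<le> 1"
      using ell_nonneg ell_le_half[of "norm \<xi>"] by auto
    have b0: "0 \<le> ?b" using B0 by simp
    have "F \<xi> * ell (norm \<xi>) \<le> (?a + ?b) * ell (norm \<xi>)"
      using F_le[of \<xi>] False ell unfolding N_def by (intro mult_right_mono) auto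
    also have "\<dots> \<le> ?a * ell (norm \<xi>) + ?b"
      using b0 ell by (simp add: distrib_right mult_left_le)
    finally have "ennreal (F \<xi> * ell (norm \<xi>)) \<le> ennreal (?a * ell (norm \<xi>) + ?b)"
      by (rule ennreal_leI)
    also have "\<dots> = ennreal (?a * ell (norm \<xi>)) + ennreal B * indicator (sphere_shell s) \<xi>"
      using A0 s0 B0 ell by (subst ennreal_plus) (auto simp: indicator_def)
    finally show ?thesis using False by (simp add: decay_def)
  qed (simp add: decay_def)
  then have "(\<integral>\<^sup>+\<xi> \<in> - ball 0 (2 * s). ennreal (F \<xi> * ell (norm \<xi>)) \<partial>lborel)
      \<le> (\<integral>\<^sup>+\<xi>. decay \<xi> + ennreal B * indicator (sphere_shell s) \<xi> \<partial>lborel)"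
    by (rule nn_integral_mono)
  also have "\<dots> = integral\<^sup>N lborel decay + ennreal B * emeasure lborel (sphere_shell s :: 'a set)"
    using shell_sets decay_measurable by (simp add: nn_integral_add nn_integral_cmult_indicator)
  also have "\<dots> \<le> ennreal (8 * 4 ^ N * A * V * ell s) + ennreal B * ennreal (9 * V * real N * 2 ^ N * ell s)"
  proof (rule add_mono)
    show "integral\<^sup>N lborel decay \<le> ennreal (8 * 4 ^ N * A * V * ell s)"
      using decay_nn_integral_le[OF s0 A0] unfolding decay_def N_def V_def .
    show "ennreal B * emeasure lborel (sphere_shell s :: 'a set) \<le> ennreal B * ennreal (9 * V * real N * 2 ^ N * ell s)"
      using emeasure_sphere_shell_le[OF s0] unfolding N_def V_def by (rule mult_left_mono) simp
  qed
  also have "\<dots> = ennreal ((8 * 4 ^ N * A + 9 * B * real N * 2 ^ N) * V * ell s)"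
  proof -
    have V0: "0 \<le> V" unfolding V_def by simp
    have "ennreal (8 * 4 ^ N * A * V * ell s) + ennreal B * ennreal (9 * V * real N * 2 ^ N * ell s)
        = ennreal (8 * 4 ^ N * A * V * ell s + B * (9 * V * real N * 2 ^ N * ell s))"
      using A0 B0 V0 ell_nonneg[of s] by (simp add: ennreal_mult ennreal_plus)
    then show ?thesis by (simp add: algebra_simps)
  qed
  finally show ?thesis unfolding N_def V_def .
qed

definition regularity_constant :: "nat \<Rightarrow> real \<Rightarrow> real \<Rightarrow> real" where
  "regularity_constant N \<Lambda> M = unit_ball_vol (real N) * 8 ^ N
     * (8 * 4 ^ N * (4 * \<bar>\<Lambda>\<bar> + real N * \<bar>M\<bar>) + 9 * real N * \<bar>M\<bar>)"

lemma alpha_regular_one_if_gradient_bound: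
  fixes \<Omega> :: "'a::euclidean_space set" and K :: "'a \<Rightarrow> 'a \<Rightarrow> real"
    and D :: "'a \<times> 'a \<Rightarrow> ('a \<times> 'a) \<Rightarrow>\<^sub>L real"
  assumes "convex \<Omega>"
    and K_bound: "\<forall>x\<in>\<Omega>. \<forall>y. 0 < norm y \<and> norm y < 1 \<longrightarrow> \<bar>K x y\<bar> \<le> M"
    and deriv: "\<forall>p\<in>\<Omega> \<times> (ball 0 1 - {0}).
                  ((\<lambda>q. K (fst q) (snd q)) has_derivative blinfun_apply (D p)) (at p)"
    and deriv_bound: "\<forall>x\<in>\<Omega>. \<forall>y. 0 < norm y \<and> norm y < 1 \<longrightarrow>
             onorm (\<lambda>h. D (x, y) (h, 0)) + onorm (\<lambda>h. D (x, y) (0, h)) \<le> \<Lambda> / norm y"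
  shows "alpha_regular \<Omega> K 1 (regularity_constant DIM('a) \<Lambda> M)"
  unfolding alpha_regular_def
proof (intro allI impI)
  fix z w :: 'a
  assume x: "z + w /\<^sub>R 2 \<in> \<Omega> \<and> z - w /\<^sub>R 2 \<in> \<Omega>"
  define N where "N = DIM('a)"
  show "(\<integral>\<^sup>+ \<xi> \<in> - ball 0 (2 * norm w).
          ennreal (\<bar>Kext K (z + w /\<^sub>R 2) (\<xi> + w /\<^sub>R 2) / norm (\<xi> + w /\<^sub>R 2) ^ DIM('a)
                  - Kext K (z - w /\<^sub>R 2) (\<xi> - w /\<^sub>R 2) / norm (\<xi> - w /\<^sub>R 2) ^ DIM('a)\<bar>
                  * ell (norm \<xi>)) \<partial>lborel)
        \<le> ennreal (regularity_constant DIM('a) \<Lambda> M * ell (norm w) powr 1)"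
  proof (cases "w = 0")
    case False
    have "(\<integral>\<^sup>+ \<xi> \<in> - ball 0 (2 * norm w).
          ennreal (\<bar>Kext K (z + w /\<^sub>R 2) (\<xi> + w /\<^sub>R 2) / norm (\<xi> + w /\<^sub>R 2) ^ DIM('a)
                  - Kext K (z - w /\<^sub>R 2) (\<xi> - w /\<^sub>R 2) / norm (\<xi> - w /\<^sub>R 2) ^ DIM('a)\<bar>
                  * ell (norm \<xi>)) \<partial>lborel)
        \<le> ennreal ((8 * 4 ^ N * ((4 * \<bar>\<Lambda>\<bar> + real N * \<bar>M\<bar>) * 8 ^ N)
                    + 9 * (\<bar>M\<bar> * 4 ^ N) * real N * 2 ^ N) * unit_ball_vol (real N) * ell (norm w))"
      unfolding N_def
      by (rule nn_integral_decay_plus_shell_le)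
        (use False Kext_quotient_diff_le[OF \<open>convex \<Omega>\<close> K_bound deriv deriv_bound] x in auto)
    also have "\<dots> = ennreal (regularity_constant DIM('a) \<Lambda> M * ell (norm w) powr 1)"
      using ell_nonneg[of "norm w"]
      by (simp add: regularity_constant_def N_def algebra_simps flip: power_mult_distrib)
    finally show ?thesis .
  qed simp
qed

theorem lemma3p6:
  fixes \<Lambda> M :: real
  shows "\<exists>\<Lambda>0. \<forall>(\<Omega> :: 'a::euclidean_space set) (K :: 'a \<Rightarrow> 'a \<Rightarrow> real).
    open \<Omega> \<and> convex \<Omega>
    \<and> (\<forall>x\<in>\<Omega>. \<forall>y. 0 < norm y \<and> norm y < 1 \<longrightarrow> \<bar>K x y\<bar> \<le> M)
    \<and> (\<exists>D :: 'a \<times> 'a \<Rightarrow> ('a \<times> 'a) \<Rightarrow>\<^sub>L real.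
          (\<forall>p\<in>\<Omega> \<times> (ball 0 1 - {0}).
             ((\<lambda>q. K (fst q) (snd q)) has_derivative blinfun_apply (D p)) (at p))
        \<and> continuous_on (\<Omega> \<times> (ball 0 1 - {0})) D
        \<and> (\<forall>x\<in>\<Omega>. \<forall>y. 0 < norm y \<and> norm y < 1 \<longrightarrow>
             onorm (\<lambda>h. D (x, y) (h, 0)) + onorm (\<lambda>h. D (x, y) (0, h)) \<le> \<Lambda> / norm y))
    \<longrightarrow> alpha_regular \<Omega> K 1 \<Lambda>0"
  using alpha_regular_one_if_gradient_bound
  by (intro exI[of _ "regularity_constant DIM('a) \<Lambda> M"] allI impI) blast

end
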